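(* A well-founded reduced order $(S,<_S)$ is tame if and only if it embeds into $(R_\lambda,<_{R_\lambda})$ for some ordinal $\lambda$. Moreover, in that case the minimal ordinal $\lambda$ such that $(S,<_S)$ embeds into $R_\lambda$ is $\lambda=\mathrm{tamerank}(S,<_S)$, and $\mathrm{tamerank}(S,<_S)<|S|^+$.
   Context: An order $(S,<_S)$ is a set with a strict partial order (antisymmetric, transitive). An embedding of $(S,<_S)$ into $(R,<_R)$ is an injection $\pi$ with $x<_S y\iff \pi(x)<_R\pi(y)$. For an ordinal $\lambda$, $R_\lambda=\{(\alpha,\beta)\in\lambda^2\mid \alpha\leq\beta\}$ with $(\alpha,\beta)<_{R_\lambda}(\alpha',\beta')\iff \beta<\alpha'$. $R_{2,2}$ is the order on $\{x_0,x_1,y_0,y_1\}$ whose only relations are $x_0<y_0$, $x_1<y_1$. $S_{\omega,2}$ is the order on $\{x_n\}_{n<\omega}\uplus\{y_n\}_{n<\omega}$ whose relations are exactly $x_m<y_n$ for $m\geq n$. An order is tame if it embeds neither $R_{2,2}$ nor $S_{\omega,2}$. For $x\in S$: $d(x)=\{z\mid z<_S x\}$, $u(x)=\{z\mid x<_S z\}$, $\mathrm{cu}(x)=S\setminus u(x)$, $\mathrm{CU}(S)=\{\mathrm{cu}(x)\mid x\in S\}$. $S$ is reduced if there are no distinct $x,y\in S$ with $(d(x),u(x))=(d(y),u(y))$. For a tame well-founded order, $(\mathrm{CU}(S),\subsetneq)$ is a well-order and $\mathrm{tamerank}(S,<_S)$ is its order type. *)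

theory Defs
  imports Main
begin

text \<open>An order is a carrier set S together with a relation lt (only its restriction
to S matters).  Strict partial order: irreflexive and transitive on S.\<close>

definition strict_po :: "'a set \<Rightarrow> ('a \<Rightarrow> 'a \<Rightarrow> bool) \<Rightarrow> bool" where
  "strict_po S lt \<longleftrightarrow>
     (\<forall>x\<in>S. \<not> lt x x) \<and>
     (\<forall>x\<in>S. \<forall>y\<in>S. \<forall>z\<in>S. lt x y \<longrightarrow> lt y z \<longrightarrow> lt x z)"

definition order_embedding ::
  "'a set \<Rightarrow> ('a \<Rightarrow> 'a \<Rightarrow> bool) \<Rightarrow> 'b set \<Rightarrow> ('b \<Rightarrow> 'b \<Rightarrow> bool) \<Rightarrow> ('a \<Rightarrow> 'b) \<Rightarrow> bool" where
  "order_embedding S lessS T lessT \<pi> \<longleftrightarrow>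
     \<pi> ` S \<subseteq> T \<and> inj_on \<pi> S \<and>
     (\<forall>x\<in>S. \<forall>y\<in>S. lessS x y \<longleftrightarrow> lessT (\<pi> x) (\<pi> y))"

definition embeds ::
  "'a set \<Rightarrow> ('a \<Rightarrow> 'a \<Rightarrow> bool) \<Rightarrow> 'b set \<Rightarrow> ('b \<Rightarrow> 'b \<Rightarrow> bool) \<Rightarrow> bool" where
  "embeds S lessS T lessT \<longleftrightarrow> (\<exists>\<pi>. order_embedding S lessS T lessT \<pi>)"

text \<open>Ordinals are represented as well-order relations (HOL's Well_order, which is
reflexive: (a,b) in r means a \<le> b).  R_lambda for the ordinal given by r:\<close>

definition R_carrier :: "'b rel \<Rightarrow> ('b \<times> 'b) set" where
  "R_carrier r = {(\<alpha>, \<beta>). (\<alpha>, \<beta>) \<in> r}"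

definition R_less :: "'b rel \<Rightarrow> ('b \<times> 'b) \<Rightarrow> ('b \<times> 'b) \<Rightarrow> bool" where
  "R_less r p q \<longleftrightarrow> (snd p, fst q) \<in> r \<and> snd p \<noteq> fst q"

datatype R22_elem = X0 | X1 | Y0 | Y1

definition R22_less :: "R22_elem \<Rightarrow> R22_elem \<Rightarrow> bool" where
  "R22_less a b \<longleftrightarrow> (a = X0 \<and> b = Y0) \<or> (a = X1 \<and> b = Y1)"

text \<open>The order S_{omega,2}: Inl n is x_n, Inr n is y_n.\<close>

definition S\<omega>2_less :: "(nat + nat) \<Rightarrow> (nat + nat) \<Rightarrow> bool" where
  "S\<omega>2_less a b \<longleftrightarrow> (\<exists>m n. a = Inl m \<and> b = Inr n \<and> m \<ge> n)"

definition tame :: "'a set \<Rightarrow> ('a \<Rightarrow> 'a \<Rightarrow> bool) \<Rightarrow> bool" where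
  "tame S lt \<longleftrightarrow>
     \<not> embeds (UNIV :: R22_elem set) R22_less S lt \<and>
     \<not> embeds (UNIV :: (nat + nat) set) S\<omega>2_less S lt"

definition down :: "'a set \<Rightarrow> ('a \<Rightarrow> 'a \<Rightarrow> bool) \<Rightarrow> 'a \<Rightarrow> 'a set" where
  "down S lt x = {z \<in> S. lt z x}"

definition up :: "'a set \<Rightarrow> ('a \<Rightarrow> 'a \<Rightarrow> bool) \<Rightarrow> 'a \<Rightarrow> 'a set" where
  "up S lt x = {z \<in> S. lt x z}"

definition cu :: "'a set \<Rightarrow> ('a \<Rightarrow> 'a \<Rightarrow> bool) \<Rightarrow> 'a \<Rightarrow> 'a set" where
  "cu S lt x = S - up S lt x"

definition CU :: "'a set \<Rightarrow> ('a \<Rightarrow> 'a \<Rightarrow> bool) \<Rightarrow> 'a set set" where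
  "CU S lt = cu S lt ` S"

definition reduced :: "'a set \<Rightarrow> ('a \<Rightarrow> 'a \<Rightarrow> bool) \<Rightarrow> bool" where
  "reduced S lt \<longleftrightarrow>
     \<not> (\<exists>x\<in>S. \<exists>y\<in>S. x \<noteq> y \<and> down S lt x = down S lt y \<and> up S lt x = up S lt y)"

text \<open>tamerank: the order type of (CU(S), proper inclusion), represented by the
(reflexive) well-order relation of inclusion on CU(S).\<close>

definition tamerank :: "'a set \<Rightarrow> ('a \<Rightarrow> 'a \<Rightarrow> bool) \<Rightarrow> 'a set rel" where
  "tamerank S lt = {(A, B). A \<in> CU S lt \<and> B \<in> CU S lt \<and> A \<subseteq> B}"

end

theory Submission
  imports Defs "HOL-Library.Ramsey"
begin

text \<open>An embedding into $R_\lambda$ represents every element by an interval of $\lambda$, with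
  $x < y$ iff the interval of $x$ ends before that of $y$ begins; in a well-order neither
  $R_{2,2}$ nor $S_{\omega,2}$ admits such a representation. Conversely, in a tame well-founded
  order the sets $\mathrm{cu}(x)$ form a chain (two incomparable ones yield a copy of $R_{2,2}$)
  without strictly decreasing sequences (by Ramsey's theorem such a sequence yields a copy of
  $S_{\omega,2}$), so inclusion well-orders $\mathrm{CU}(S)$. If $S$ is reduced, sending $y$ to
  the pair (least cu-set containing $y$, $\mathrm{cu}(y)$) embeds $S$ into $R_{\mathrm{tamerank}}$.
  Any embedding $\pi$ into $R_\lambda$ induces the strictly monotone map
  $\mathrm{cu}(x) \mapsto$ (right end of $\pi(x)$), whence $\mathrm{tamerank} \le \lambda$; and
  $|\mathrm{CU}(S)| \le |S|$ gives $\mathrm{tamerank} < |S|^+$.\<close>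

section \<open>Well-orders\<close>

lemma Well_order_not_less_iff:
  assumes "Well_order r" "a \<in> Field r" "b \<in> Field r"
  shows "\<not> ((a, b) \<in> r \<and> a \<noteq> b) \<longleftrightarrow> (b, a) \<in> r"
  using assms unfolding order_on_defs refl_on_def total_on_def antisym_def by metis

lemma Well_order_inflationary:
  assumes r: "Well_order r"
    and h_Field: "\<And>a. a \<in> Field r \<Longrightarrow> h a \<in> Field r"
    and h_mono: "\<And>a b. (a, b) \<in> r \<Longrightarrow> a \<noteq> b \<Longrightarrow> (h a, h b) \<in> r \<and> h a \<noteq> h b"
    and a: "a \<in> Field r"
  shows "(a, h a) \<in> r"
proof (rule ccontr)
  assume "(a, h a) \<notin> r"
  define B where "B = {x \<in> Field r. (h x, x) \<in> r \<and> h x \<noteq> x}"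
  have "a \<in> B"
    using \<open>(a, h a) \<notin> r\<close> Well_order_not_less_iff[OF r a h_Field[OF a]] a unfolding B_def by auto
  then obtain m where m: "m \<in> B" and m_min: "\<And>y. (y, m) \<in> r - Id \<Longrightarrow> y \<notin> B"
    using wfE_min[of "r - Id" a B] r unfolding order_on_defs by blast
  have "h m \<in> B"
    using m h_Field h_mono[of "h m" m] unfolding B_def by auto
  moreover have "(h m, m) \<in> r - Id"
    using m unfolding B_def by auto
  ultimately show False
    using m_min by blast
qed

text \<open>A strictly monotone map between well-orders shows that the first one is at most the
  second: otherwise composing it with the embedding of the second onto a proper initial segment
  of the first would give a strictly monotone self-map that is not inflationary.\<close>

lemma strict_mono_map_ordLeq:
  assumes r: "Well_order r" and r': "Well_order r'"
    and f_Field: "\<And>a. a \<in> Field r \<Longrightarrow> f a \<in> Field r'"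
    and f_mono: "\<And>a b. (a, b) \<in> r \<Longrightarrow> a \<noteq> b \<Longrightarrow> (f a, f b) \<in> r' \<and> f a \<noteq> f b"
  shows "(r, r') \<in> ordLeq"
proof (rule ccontr)
  assume "(r, r') \<notin> ordLeq"
  then have "(r', r) \<in> ordLess"
    using not_ordLeq_iff_ordLess[OF r' r] by simp
  then obtain g where g: "embed r' r g" "\<not> bij_betw g (Field r') (Field r)"
    unfolding ordLess_def embedS_def by auto
  have g_inj: "inj_on g (Field r')"
    using embed_inj_on[OF r' g(1)] .
  have "wo_rel.ofilter r (g ` Field r')" "g ` Field r' \<noteq> Field r"
    using embed_Field_ofilter[OF r' r g(1)] g(2) g_inj unfolding bij_betw_def by auto
  then obtain a where a: "a \<in> Field r" "g ` Field r' = underS r a"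
    using wo_rel.ofilter_underS_Field[of r] r unfolding wo_rel_def by blast
  have "(g (f x), g (f y)) \<in> r \<and> g (f x) \<noteq> g (f y)" if "(x, y) \<in> r" "x \<noteq> y" for x y
  proof -
    have "f x \<in> Field r'" "f y \<in> Field r'"
      using that f_Field unfolding Field_def by auto
    then show ?thesis
      using f_mono[OF that] embed_compat[OF g(1)] g_inj unfolding compat_def inj_on_def by auto
  qed
  moreover have "g (f x) \<in> Field r" if "x \<in> Field r" for x
    using a f_Field[OF that] unfolding underS_def Field_def by blast
  ultimately have "(a, g (f a)) \<in> r"
    using Well_order_inflationary[OF r, of "g \<circ> f"] a(1) by auto
  moreover have "(g (f a), a) \<in> r" "g (f a) \<noteq> a"
    using a f_Field[OF a(1)] unfolding underS_def by auto
  ultimately show False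
    using r unfolding order_on_defs antisym_def by blast
qed

lemma ordLess_cardSuc_if_card_of_Field_ordLeq:
  assumes r: "Well_order r" and card: "(card_of (Field r), card_of A) \<in> ordLeq"
  shows "(r, cardSuc (card_of A)) \<in> ordLess"
proof (rule ccontr)
  have A: "Card_order (card_of A)"
    by (rule card_of_Card_order)
  have Suc: "Card_order (cardSuc (card_of A))"
    using cardSuc_Card_order[OF A] .
  assume "(r, cardSuc (card_of A)) \<notin> ordLess"
  then have "(cardSuc (card_of A), r) \<in> ordLeq"
    using not_ordLess_iff_ordLeq[OF _ r] Suc unfolding card_order_on_def by blast
  then have "(card_of (Field (cardSuc (card_of A))), card_of (Field r)) \<in> ordLeq"
    by (rule card_of_mono2)
  moreover have "(cardSuc (card_of A), card_of (Field (cardSuc (card_of A)))) \<in> ordLeq"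
    using card_of_Field_ordIso[OF Suc] ordIso_iff_ordLeq by blast
  ultimately have "(cardSuc (card_of A), card_of A) \<in> ordLeq"
    using card ordLeq_transitive by metis
  then show False
    using cardSuc_greater[OF A] not_ordLess_ordLeq by blast
qed

lemma strict_po_irrefl: "strict_po S lt \<Longrightarrow> x \<in> S \<Longrightarrow> \<not> lt x x"
  unfolding strict_po_def by blast

lemma strict_po_trans:
  "strict_po S lt \<Longrightarrow> x \<in> S \<Longrightarrow> y \<in> S \<Longrightarrow> z \<in> S \<Longrightarrow> lt x y \<Longrightarrow> lt y z \<Longrightarrow> lt x z"
  unfolding strict_po_def by blast

lemma wfp_on_no_descending_chain:
  assumes "wfp_on S lt" "\<And>i. g i \<in> S" "\<And>i. lt (g (Suc i)) (g i)"
  shows False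
proof -
  obtain z where "z \<in> range g" "\<And>y. lt y z \<Longrightarrow> y \<notin> range g"
    using assms(1,2) unfolding wfp_on_iff_ex_minimal by (metis empty_iff image_subset_iff rangeI)
  then show False
    using assms(3) by blast
qed

lemma wfp_on_irrefl: "wfp_on S lt \<Longrightarrow> x \<in> S \<Longrightarrow> \<not> lt x x"
  using wfp_on_no_descending_chain[of S lt "\<lambda>_. x"] by blast

lemma mem_up_iff: "z \<in> up S lt x \<longleftrightarrow> z \<in> S \<and> lt x z"
  unfolding up_def by auto

lemma mem_cu_iff: "z \<in> cu S lt x \<longleftrightarrow> z \<in> S \<and> \<not> lt x z"
  unfolding cu_def up_def by auto

lemma cu_subset: "cu S lt x \<subseteq> S"
  unfolding cu_def by blast

lemma up_eq_Diff_cu: "up S lt x = S - cu S lt x"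
  unfolding cu_def up_def by auto

lemma embeds_trans:
  assumes "embeds A la B lb" "embeds B lb C lc"
  shows "embeds A la C lc"
proof -
  obtain f g where "order_embedding A la B lb f" "order_embedding B lb C lc g"
    using assms unfolding embeds_def by blast
  then have "order_embedding A la C lc (g \<circ> f)"
    unfolding order_embedding_def inj_on_def by (auto simp: image_subset_iff)
  then show ?thesis
    unfolding embeds_def by blast
qed

section \<open>Orders embeddable into $R_\lambda$ are tame\<close>

lemma R_carrier_Field:
  assumes "p \<in> R_carrier r"
  shows "fst p \<in> Field r" "snd p \<in> Field r"
  using assms unfolding R_carrier_def by (auto simp: Field_def Domain_fst Range_snd)

lemma not_R_less_iff:
  assumes "Well_order r" "p \<in> R_carrier r" "q \<in> R_carrier r"
  shows "\<not> R_less r p q \<longleftrightarrow> (fst q, snd p) \<in> r"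
  unfolding R_less_def
  using Well_order_not_less_iff[OF assms(1) R_carrier_Field(2)[OF assms(2)] R_carrier_Field(1)[OF assms(3)]] .

lemma R_not_embeds_R22:
  assumes r: "Well_order r"
  shows "\<not> embeds (UNIV :: R22_elem set) R22_less (R_carrier r) (R_less r)"
proof
  assume "embeds (UNIV :: R22_elem set) R22_less (R_carrier r) (R_less r)"
  then obtain \<pi> where \<pi>: "\<And>e. \<pi> e \<in> R_carrier r" "\<And>e f. R22_less e f \<longleftrightarrow> R_less r (\<pi> e) (\<pi> f)"
    unfolding embeds_def order_embedding_def by blast
  let ?b0 = "snd (\<pi> X0)" and ?c0 = "fst (\<pi> Y0)" and ?b1 = "snd (\<pi> X1)" and ?c1 = "fst (\<pi> Y1)"
  have b0c0: "(?b0, ?c0) \<in> r" "?b0 \<noteq> ?c0" and b1c1: "(?b1, ?c1) \<in> r"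
    using \<pi>(2)[of X0 Y0] \<pi>(2)[of X1 Y1] by (auto simp: R22_less_def R_less_def)
  have c1b0: "(?c1, ?b0) \<in> r" and c0b1: "(?c0, ?b1) \<in> r"
    using \<pi>(2)[of X0 Y1] \<pi>(2)[of X1 Y0] not_R_less_iff[OF r \<pi>(1) \<pi>(1)] by (auto simp: R22_less_def)
  have tr: "trans r" and an: "antisym r"
    using r unfolding order_on_defs by auto
  have "(?c0, ?b0) \<in> r"
    using transD[OF tr c0b1 transD[OF tr b1c1 c1b0]] .
  then show False
    using antisymD[OF an b0c0(1)] b0c0(2) by blast
qed

lemma R_not_embeds_S\<omega>2:
  assumes r: "Well_order r"
  shows "\<not> embeds (UNIV :: (nat + nat) set) S\<omega>2_less (R_carrier r) (R_less r)"
proof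
  assume "embeds (UNIV :: (nat + nat) set) S\<omega>2_less (R_carrier r) (R_less r)"
  then obtain \<pi> where \<pi>: "\<And>e. \<pi> e \<in> R_carrier r" "\<And>e f. S\<omega>2_less e f \<longleftrightarrow> R_less r (\<pi> e) (\<pi> f)"
    unfolding embeds_def order_embedding_def by blast
  define b where "b n = snd (\<pi> (Inl n))" for n
  define c where "c n = fst (\<pi> (Inr n))" for n
  have tr: "trans r" and an: "antisym r"
    using r unfolding order_on_defs by auto
  have "(c (Suc n), c n) \<in> r - Id" for n
  proof -
    have bc: "(b n, c n) \<in> r" "b n \<noteq> c n" and cb: "(c (Suc n), b n) \<in> r"
      using \<pi>(2)[of "Inl n" "Inr n"] \<pi>(2)[of "Inl n" "Inr (Suc n)"] not_R_less_iff[OF r \<pi>(1) \<pi>(1)]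
      by (auto simp: S\<omega>2_less_def R_less_def b_def c_def)
    have "c (Suc n) \<noteq> c n"
      using antisymD[OF an bc(1)] cb bc(2) by auto
    then show ?thesis
      using transD[OF tr cb bc(1)] by blast
  qed
  then show False
    using r unfolding order_on_defs wf_iff_no_infinite_down_chain by blast
qed

lemma tame_if_embeds_R:
  assumes "Well_order r" "embeds S lt (R_carrier r) (R_less r)"
  shows "tame S lt"
  unfolding tame_def
  using R_not_embeds_R22[OF assms(1)] R_not_embeds_S\<omega>2[OF assms(1)] embeds_trans[OF _ assms(2)]
  by metis

section \<open>The cu-sets of a tame order\<close>

lemma tame_cu_linear:
  assumes po: "strict_po S lt" and t: "tame S lt" and x: "x \<in> S" and y: "y \<in> S"
  shows "cu S lt x \<subseteq> cu S lt y \<or> cu S lt y \<subseteq> cu S lt x"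
proof (rule ccontr)
  assume "\<not> ?thesis"
  then obtain a b where a: "a \<in> S" "lt y a" "\<not> lt x a" and b: "b \<in> S" "lt x b" "\<not> lt y b"
    by (auto simp: mem_cu_iff)
  note irr = strict_po_irrefl[OF po] and tr = strict_po_trans[OF po]
  have nxy: "\<not> lt x y" using tr[OF x y a(1)] a by blast
  have nyx: "\<not> lt y x" using tr[OF y x b(1)] b by blast
  have nab: "\<not> lt a b" using tr[OF y a(1) b(1)] a b by blast
  have nba: "\<not> lt b a" using tr[OF x b(1) a(1)] a b by blast
  have nax: "\<not> lt a x" using tr[OF y a(1) x] a nyx by blast
  have nby: "\<not> lt b y" using tr[OF x b(1) y] b nxy by blast
  have nay: "\<not> lt a y" using tr[OF a(1) y a(1)] a irr by blast
  have nbx: "\<not> lt b x" using tr[OF b(1) x b(1)] b irr by blast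
  have distinct: "x \<noteq> y" "x \<noteq> a" "x \<noteq> b" "y \<noteq> a" "y \<noteq> b" "a \<noteq> b"
    using a(2,3) b(2,3) nab nba irr[OF x] irr[OF y] by auto
  define \<pi> where "\<pi> e = (case e of X0 \<Rightarrow> x | Y0 \<Rightarrow> b | X1 \<Rightarrow> y | Y1 \<Rightarrow> a)" for e
  have "order_embedding (UNIV :: R22_elem set) R22_less S lt \<pi>"
    unfolding order_embedding_def
  proof (intro conjI ballI)
    show "\<pi> ` UNIV \<subseteq> S"
      using x y a b by (auto simp: \<pi>_def split: R22_elem.splits)
    show "inj_on \<pi> UNIV"
    proof (rule inj_onI)
      show "e = f" if "\<pi> e = \<pi> f" for e f
        using that distinct distinct[symmetric] by (cases e; cases f) (simp_all add: \<pi>_def)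
    qed
    show "R22_less e f = lt (\<pi> e) (\<pi> f)" for e f
      using irr[OF x] irr[OF y] irr[OF a(1)] irr[OF b(1)] a(2,3) b(2,3) nxy nyx nab nba nax nby nay nbx
      unfolding \<pi>_def R22_less_def by (cases e; cases f) simp_all
  qed
  then show False
    using t unfolding tame_def embeds_def by blast
qed

lemma embeds_S\<omega>2_if_sequences:
  fixes x y :: "nat \<Rightarrow> 'a"
  assumes po: "strict_po S lt" and x: "\<And>m. x m \<in> S" and y: "\<And>n. y n \<in> S"
    and xy: "\<And>m n. lt (x m) (y n) \<longleftrightarrow> n \<le> m"
    and x_antichain: "\<And>m n. \<not> lt (x m) (x n)" and y_antichain: "\<And>m n. \<not> lt (y m) (y n)"
  shows "embeds (UNIV :: (nat + nat) set) S\<omega>2_less S lt"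
proof -
  have lt_x_max: "lt (x (max m n)) (y n)" for m n
    using xy[of "max m n" n] by simp
  have yx: "\<not> lt (y n) (x m)" for m n
    using strict_po_trans[OF po x y x, of "max m n" n m] lt_x_max x_antichain by blast
  have x_neq_y: "x m \<noteq> y n" for m n
    using lt_x_max[of m n] x_antichain by metis
  have x_inj: "m = n" if "x m = x n" for m n
    using xy[of m n] xy[of n m] xy[of m m] xy[of n n] that by (simp only:) linarith
  have y_inj: "m = n" if "y m = y n" for m n
    using xy[of m n] xy[of n m] xy[of m m] xy[of n n] that by (simp only:) linarith
  have "inj (case_sum x y)"
  proof (rule injI)
    show "e = f" if "case_sum x y e = case_sum x y f" for e f
      using that x_neq_y[symmetric] by (cases e; cases f) (auto simp: x_neq_y dest: x_inj y_inj)
  qed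
  moreover have "S\<omega>2_less e f = lt (case_sum x y e) (case_sum x y f)" for e f
    by (cases e; cases f) (simp_all add: S\<omega>2_less_def xy yx x_antichain y_antichain)
  ultimately have "order_embedding (UNIV :: (nat + nat) set) S\<omega>2_less S lt (case_sum x y)"
    using x y unfolding order_embedding_def by (auto split: sum.splits)
  then show ?thesis
    unfolding embeds_def by blast
qed

text \<open>Ramsey's theorem for pairs, colouring $\{i < j\}$ by whether $s_j < s_i$: a homogeneous set of
  the first colour would give an infinite descending chain.\<close>

lemma wfp_on_antichain_subseq:
  assumes wf: "wfp_on S lt" and s: "\<And>i. s i \<in> S"
    and no_ascent: "\<And>i j. i < j \<Longrightarrow> \<not> lt (s i) (s j)"
  obtains \<phi> :: "nat \<Rightarrow> nat" where "strict_mono \<phi>" "\<And>i j. \<not> lt (s (\<phi> i)) (s (\<phi> j))"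
proof -
  define colour where "colour X = (if lt (s (Max X)) (s (Min X)) then 0 else 1 :: nat)" for X
  obtain H c where H: "infinite H" and hom: "\<forall>a\<in>H. \<forall>b\<in>H. a \<noteq> b \<longrightarrow> colour {a, b} = c"
  proof -
    have "\<forall>a\<in>UNIV. \<forall>b\<in>UNIV. a \<noteq> b \<longrightarrow> colour {a, b} < 2"
      unfolding colour_def by simp
    then show thesis
      using Ramsey2[of "UNIV :: nat set" colour 2] that by blast
  qed
  define \<phi> where "\<phi> = enumerate H"
  have \<phi>: "strict_mono \<phi>" "\<And>n. \<phi> n \<in> H"
    unfolding \<phi>_def using strict_mono_enumerate enumerate_in_set H by blast+
  have colour_\<phi>: "c = (if lt (s (\<phi> j)) (s (\<phi> i)) then 0 else 1)" if "i < j" for i j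
  proof -
    have "\<phi> i < \<phi> j"
      using \<phi>(1) that by (simp add: strict_mono_less)
    then have "colour {\<phi> i, \<phi> j} = (if lt (s (\<phi> j)) (s (\<phi> i)) then 0 else 1)"
      unfolding colour_def by (simp add: max_def min_def)
    moreover have "colour {\<phi> i, \<phi> j} = c"
      using hom \<phi>(2) \<open>\<phi> i < \<phi> j\<close> by simp
    ultimately show ?thesis
      by simp
  qed
  have "\<not> lt (s (\<phi> j)) (s (\<phi> i))" if "i < j" for i j
  proof
    assume "lt (s (\<phi> j)) (s (\<phi> i))"
    then have "c = 0"
      using colour_\<phi>[OF that] by simp
    then have "lt (s (\<phi> (Suc k))) (s (\<phi> k))" for k
      using colour_\<phi>[of k "Suc k"] by (simp split: if_splits)
    then show False
      using wfp_on_no_descending_chain[OF wf, of "s \<circ> \<phi>"] s by simp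
  qed
  moreover have "\<not> lt (s (\<phi> i)) (s (\<phi> j))" if "i < j" for i j
    using no_ascent \<phi>(1) that by (simp add: strict_mono_less)
  ultimately have "\<not> lt (s (\<phi> i)) (s (\<phi> j))" for i j
    using wfp_on_irrefl[OF wf s] by (cases i j rule: linorder_cases) simp_all
  with \<phi>(1) show thesis
    by (rule that)
qed

text \<open>Pick $y_n \in u(x_{n+1}) \setminus u(x_n)$; then $x_{m+1} < y_n$ iff $n \le m$, and no $x$ or $y$
  lies below a later one. Passing twice to an antichain subsequence yields a copy of
  $S_{\omega,2}$.\<close>

lemma tame_no_strictly_increasing_up_chain:
  assumes po: "strict_po S lt" and wf: "wfp_on S lt" and t: "tame S lt"
    and x: "\<And>i. x i \<in> S" and incr: "\<And>i. up S lt (x i) \<subset> up S lt (x (Suc i))"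
  shows False
proof -
  let ?U = "\<lambda>i. up S lt (x i)"
  have U_mono: "i \<le> j \<Longrightarrow> ?U i \<subseteq> ?U j" for i j
    using lift_Suc_mono_le[of ?U] incr by blast
  have U_strict: "i < j \<Longrightarrow> ?U i \<subset> ?U j" for i j
    using lift_Suc_mono_less[of ?U] incr by blast
  have "\<forall>n. \<exists>z. z \<in> ?U (Suc n) - ?U n"
    using incr by blast
  then obtain y where y: "\<And>n. y n \<in> ?U (Suc n) - ?U n"
    by metis
  have yS: "y n \<in> S" for n
    using y[of n] by (simp add: mem_up_iff)
  have xy: "lt (x (Suc m)) (y n) \<longleftrightarrow> n \<le> m" for m n
  proof
    assume "lt (x (Suc m)) (y n)"
    then show "n \<le> m"
      using y[of n] U_mono[of "Suc m" n] yS by (force simp: mem_up_iff)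
  next
    assume "n \<le> m"
    then show "lt (x (Suc m)) (y n)"
      using y[of n] U_mono[of "Suc n" "Suc m"] by (auto simp: mem_up_iff)
  qed
  have x_no_ascent: "\<not> lt (x i) (x j)" if "i < j" for i j
  proof
    assume "lt (x i) (x j)"
    then have "?U j \<subseteq> ?U i"
      using strict_po_trans[OF po x x] by (auto simp: mem_up_iff)
    then show False
      using U_strict[OF that] by blast
  qed
  have y_no_ascent: "\<not> lt (y i) (y j)" if "i < j" for i j
  proof
    assume "lt (y i) (y j)"
    then have "lt (x (Suc i)) (y j)"
      using strict_po_trans[OF po x yS yS] xy[of i i] by blast
    then show False
      using xy that by simp
  qed
  obtain \<phi> :: "nat \<Rightarrow> nat" where \<phi>: "strict_mono \<phi>" "\<And>i j. \<not> lt (x (Suc (\<phi> i))) (x (Suc (\<phi> j)))"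
  proof (rule wfp_on_antichain_subseq[OF wf, of "\<lambda>i. x (Suc i)"])
    show "x (Suc i) \<in> S" for i
      by (rule x)
    show "\<not> lt (x (Suc i)) (x (Suc j))" if "i < j" for i j
      using x_no_ascent that by simp
  qed (rule that)
  obtain \<psi> :: "nat \<Rightarrow> nat" where \<psi>: "strict_mono \<psi>" "\<And>i j. \<not> lt (y (\<phi> (\<psi> i))) (y (\<phi> (\<psi> j)))"
  proof (rule wfp_on_antichain_subseq[OF wf, of "\<lambda>i. y (\<phi> i)"])
    show "y (\<phi> i) \<in> S" for i
      by (rule yS)
    show "\<not> lt (y (\<phi> i)) (y (\<phi> j))" if "i < j" for i j
      using y_no_ascent \<phi>(1) that by (simp add: strict_mono_less)
  qed (rule that)
  have "embeds (UNIV :: (nat + nat) set) S\<omega>2_less S lt"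
  proof (rule embeds_S\<omega>2_if_sequences[OF po])
    show "lt (x (Suc (\<phi> (\<psi> m)))) (y (\<phi> (\<psi> n))) \<longleftrightarrow> n \<le> m" for m n
      using xy strict_mono_less_eq[OF \<phi>(1)] strict_mono_less_eq[OF \<psi>(1)] by simp
  qed (use x yS \<phi>(2) \<psi>(2) in blast)+
  then show False
    using t unfolding tame_def by blast
qed

section \<open>The tamerank\<close>

lemma Field_tamerank: "Field (tamerank S lt) = CU S lt"
  unfolding tamerank_def Field_def by auto

lemma cu_in_CU: "x \<in> S \<Longrightarrow> cu S lt x \<in> CU S lt"
  unfolding CU_def by blast

lemma tame_CU_linear:
  assumes "strict_po S lt" "tame S lt" "C \<in> CU S lt" "D \<in> CU S lt"
  shows "C \<subseteq> D \<or> D \<subseteq> C"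
proof -
  obtain x y where "x \<in> S" "y \<in> S" "C = cu S lt x" "D = cu S lt y"
    using assms(3,4) unfolding CU_def by blast
  then show ?thesis
    using tame_cu_linear[OF assms(1,2)] by blast
qed

lemma Well_order_tamerank:
  assumes po: "strict_po S lt" and wf: "wfp_on S lt" and t: "tame S lt"
  shows "Well_order (tamerank S lt)"
proof -
  have "wf (tamerank S lt - Id)"
    unfolding wf_iff_no_infinite_down_chain
  proof
    assume "\<exists>c. \<forall>i. (c (Suc i), c i) \<in> tamerank S lt - Id"
    then obtain c where "\<And>i. (c (Suc i), c i) \<in> tamerank S lt - Id"
      by blast
    then have c: "\<And>i. c i \<in> CU S lt" "\<And>i. c (Suc i) \<subset> c i"
      unfolding tamerank_def by auto
    have "\<forall>i. \<exists>z. z \<in> S \<and> cu S lt z = c i"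
      using c(1) unfolding CU_def by (metis imageE)
    then obtain x where x: "\<And>i. x i \<in> S" and cu_x: "\<And>i. cu S lt (x i) = c i"
      by metis
    have "up S lt (x i) \<subset> up S lt (x (Suc i))" for i
    proof -
      have "cu S lt (x (Suc i)) \<subset> cu S lt (x i)"
        using c(2) cu_x by simp
      then show ?thesis
        unfolding up_eq_Diff_cu using cu_subset[of S lt "x i"] by blast
    qed
    then show False
      by (rule tame_no_strictly_increasing_up_chain[OF po wf t x])
  qed
  moreover have "total_on (CU S lt) (tamerank S lt)"
    using tame_CU_linear[OF po t] unfolding total_on_def tamerank_def by simp
  ultimately have "well_order_on (CU S lt) (tamerank S lt)"
    unfolding order_on_defs by (auto simp: tamerank_def refl_on_def trans_def antisym_def)
  then show ?thesis
    by (simp add: Field_tamerank)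
qed

text \<open>Each $y$ is sent to the pair $(\alpha(y), \mathrm{cu}(y))$, where $\alpha(y)$ is the least element of
  $\mathrm{CU}(S)$ containing $y$; then $x < y$ iff $\mathrm{cu}(x) \subsetneq \alpha(y)$.\<close>

lemma tamerank_embedding:
  assumes po: "strict_po S lt" and wf: "wfp_on S lt" and t: "tame S lt" and red: "reduced S lt"
  shows "embeds S lt (R_carrier (tamerank S lt)) (R_less (tamerank S lt))"
proof -
  let ?T = "tamerank S lt"
  have T: "wo_rel ?T"
    using Well_order_tamerank[OF po wf t] unfolding wo_rel_def .
  define \<alpha> where "\<alpha> y = wo_rel.minim ?T {C \<in> CU S lt. y \<in> C}" for y
  have y_in_cu: "y \<in> cu S lt y" if "y \<in> S" for y
    using that strict_po_irrefl[OF po] by (simp add: mem_cu_iff)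
  have \<alpha>: "\<alpha> y \<in> CU S lt" "y \<in> \<alpha> y" "\<And>D. D \<in> CU S lt \<Longrightarrow> y \<in> D \<Longrightarrow> \<alpha> y \<subseteq> D"
    if "y \<in> S" for y
  proof -
    have ne: "{C \<in> CU S lt. y \<in> C} \<subseteq> Field ?T" "{C \<in> CU S lt. y \<in> C} \<noteq> {}"
      using cu_in_CU[OF that] y_in_cu[OF that] by (auto simp: Field_tamerank)
    show "\<alpha> y \<in> CU S lt" "y \<in> \<alpha> y"
      using wo_rel.minim_in[OF T ne] unfolding \<alpha>_def by auto
    show "\<alpha> y \<subseteq> D" if "D \<in> CU S lt" "y \<in> D" for D
      using wo_rel.minim_least[OF T ne(1), of D] that unfolding \<alpha>_def tamerank_def by auto
  qed
  have lt_iff: "lt x y \<longleftrightarrow> cu S lt x \<subset> \<alpha> y" if x: "x \<in> S" and y: "y \<in> S" for x y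
  proof
    assume "lt x y"
    then have "y \<notin> cu S lt x"
      by (simp add: mem_cu_iff)
    then show "cu S lt x \<subset> \<alpha> y"
      using tame_CU_linear[OF po t cu_in_CU[OF x] \<alpha>(1)[OF y]] \<alpha>(2)[OF y] by blast
  next
    assume "cu S lt x \<subset> \<alpha> y"
    then show "lt x y"
      using \<alpha>(3)[OF y cu_in_CU[OF x]] y by (auto simp: mem_cu_iff)
  qed
  define \<pi> where "\<pi> y = (\<alpha> y, cu S lt y)" for y
  have "order_embedding S lt (R_carrier ?T) (R_less ?T) \<pi>"
    unfolding order_embedding_def
  proof (intro conjI ballI)
    show "\<pi> ` S \<subseteq> R_carrier ?T"
    proof (rule image_subsetI)
      fix y assume y: "y \<in> S"
      have "\<alpha> y \<subseteq> cu S lt y"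
        using \<alpha>(3)[OF y cu_in_CU[OF y] y_in_cu[OF y]] .
      then show "\<pi> y \<in> R_carrier ?T"
        using \<alpha>(1)[OF y] cu_in_CU[OF y] unfolding R_carrier_def tamerank_def \<pi>_def by simp
    qed
    show "inj_on \<pi> S"
    proof (rule inj_onI)
      fix x y assume x: "x \<in> S" and y: "y \<in> S" and "\<pi> x = \<pi> y"
      then have "\<alpha> x = \<alpha> y" "cu S lt x = cu S lt y"
        unfolding \<pi>_def by auto
      then have "down S lt x = down S lt y" "up S lt x = up S lt y"
        using lt_iff[OF _ x] lt_iff[OF _ y] by (auto simp: down_def up_eq_Diff_cu)
      then show "x = y"
        using red x y unfolding reduced_def by blast
    qed
    show "lt x y = R_less ?T (\<pi> x) (\<pi> y)" if "x \<in> S" "y \<in> S" for x y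
      using lt_iff[OF that] \<alpha>(1)[OF that(2)] cu_in_CU[OF that(1)]
      unfolding R_less_def \<pi>_def tamerank_def by auto
  qed
  then show ?thesis
    unfolding embeds_def by blast
qed

text \<open>If $\pi$ embeds $S$ into $R_\lambda$, then $\mathrm{cu}(x) \mapsto \mathrm{snd}(\pi(x))$ is well defined
  and strictly monotone: a witness $z \in u(x) \setminus u(y)$ gives
  $\mathrm{snd}(\pi(x)) < \mathrm{fst}(\pi(z)) \le \mathrm{snd}(\pi(y))$.\<close>

lemma tamerank_ordLeq_if_embeds:
  assumes po: "strict_po S lt" and wf: "wfp_on S lt" and t: "tame S lt"
    and r: "Well_order r" and e: "embeds S lt (R_carrier r) (R_less r)"
  shows "(tamerank S lt, r) \<in> ordLeq"
proof -
  obtain \<pi> where \<pi>: "\<And>x. x \<in> S \<Longrightarrow> \<pi> x \<in> R_carrier r"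
    and lt_iff: "\<And>x y. x \<in> S \<Longrightarrow> y \<in> S \<Longrightarrow> lt x y \<longleftrightarrow> R_less r (\<pi> x) (\<pi> y)"
    using e unfolding embeds_def order_embedding_def by blast
  have snd_strict: "(snd (\<pi> x), snd (\<pi> y)) \<in> r \<and> snd (\<pi> x) \<noteq> snd (\<pi> y)"
    if x: "x \<in> S" and y: "y \<in> S" and xy: "cu S lt x \<subset> cu S lt y" for x y
  proof -
    obtain z where z: "z \<in> S" "lt x z" "\<not> lt y z"
      using xy by (auto simp: mem_cu_iff)
    have xz: "(snd (\<pi> x), fst (\<pi> z)) \<in> r" "snd (\<pi> x) \<noteq> fst (\<pi> z)"
      using lt_iff[OF x z(1)] z(2) unfolding R_less_def by auto
    have zy: "(fst (\<pi> z), snd (\<pi> y)) \<in> r"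
      using lt_iff[OF y z(1)] z(3) not_R_less_iff[OF r \<pi>[OF y] \<pi>[OF z(1)]] by simp
    have tr: "trans r" and an: "antisym r"
      using r unfolding order_on_defs by auto
    show ?thesis
      using transD[OF tr xz(1) zy] antisymD[OF an xz(1)] zy xz(2) by auto
  qed
  define g where "g C = snd (\<pi> (inv_into S (cu S lt) C))" for C
  show ?thesis
  proof (rule strict_mono_map_ordLeq[OF Well_order_tamerank[OF po wf t] r])
    show "g C \<in> Field r" if "C \<in> Field (tamerank S lt)" for C
      using that \<pi> R_carrier_Field(2) inv_into_into[of C "cu S lt" S]
      unfolding Field_tamerank CU_def g_def by blast
    show "(g C, g D) \<in> r \<and> g C \<noteq> g D" if "(C, D) \<in> tamerank S lt" "C \<noteq> D" for C D
    proof -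
      have C: "C \<in> cu S lt ` S" and D: "D \<in> cu S lt ` S" and "C \<subset> D"
        using that unfolding tamerank_def CU_def by auto
      then show ?thesis
        using snd_strict[OF inv_into_into[OF C] inv_into_into[OF D]]
        unfolding g_def f_inv_into_f[OF C] f_inv_into_f[OF D] by blast
    qed
  qed
qed

lemma tamerank_ordLess_cardSuc:
  assumes "strict_po S lt" "wfp_on S lt" "tame S lt"
  shows "(tamerank S lt, cardSuc (card_of S)) \<in> ordLess"
  using ordLess_cardSuc_if_card_of_Field_ordLeq[OF Well_order_tamerank[OF assms]] card_of_image
  unfolding Field_tamerank CU_def by blast

theorem proposition2p10:
  fixes S :: "'a set" and lt :: "'a \<Rightarrow> 'a \<Rightarrow> bool"
  assumes "strict_po S lt"
    and "wfp_on S lt"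
    and "reduced S lt"
  shows "(tame S lt \<longleftrightarrow>
            (\<exists>r :: 'a set rel. Well_order r \<and> embeds S lt (R_carrier r) (R_less r)))
       \<and> (\<forall>r :: 'b rel. Well_order r \<and> embeds S lt (R_carrier r) (R_less r) \<longrightarrow> tame S lt)
       \<and> (tame S lt \<longrightarrow>
            Well_order (tamerank S lt)
            \<and> embeds S lt (R_carrier (tamerank S lt)) (R_less (tamerank S lt))
            \<and> (\<forall>r :: 'b rel. Well_order r \<and> embeds S lt (R_carrier r) (R_less r)
                  \<longrightarrow> (tamerank S lt, r) \<in> ordLeq)
            \<and> (tamerank S lt, cardSuc (card_of S)) \<in> ordLess)"
proof (intro conjI allI impI)
  show "tame S lt \<longleftrightarrow> (\<exists>r :: 'a set rel. Well_order r \<and> embeds S lt (R_carrier r) (R_less r))"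
    using Well_order_tamerank[OF assms(1,2)] tamerank_embedding[OF assms(1,2) _ assms(3)]
      tame_if_embeds_R[of _ S lt] by metis
  show "tame S lt" if "Well_order r \<and> embeds S lt (R_carrier r) (R_less r)" for r :: "'b rel"
    using tame_if_embeds_R that by blast
  assume t: "tame S lt"
  show "Well_order (tamerank S lt)"
    using Well_order_tamerank[OF assms(1,2) t] .
  show "embeds S lt (R_carrier (tamerank S lt)) (R_less (tamerank S lt))"
    using tamerank_embedding[OF assms(1,2) t assms(3)] .
  show "(tamerank S lt, r) \<in> ordLeq" if "Well_order r \<and> embeds S lt (R_carrier r) (R_less r)"
    for r :: "'b rel"
    using tamerank_ordLeq_if_embeds[OF assms(1,2) t] that by blast
  show "(tamerank S lt, cardSuc (card_of S)) \<in> ordLess"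
    using tamerank_ordLess_cardSuc[OF assms(1,2) t] .
qed

end
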